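(* Let $A=\Bbbk_{-1}[u,v]$ and $G=G_{n,k}$, where $n,k$ are positive coprime integers with $k\not\equiv2\pmod4$. Then the invariant ring $A^G$ is commutative if and only if $n$ or $k$ is even.
   Context: $\Bbbk$ is algebraically closed of characteristic $0$; $\Bbbk_{-1}[u,v]=\Bbbk\langle u,v\rangle/(vu+uv)$; matrices $\begin{pmatrix}a&b\\c&d\end{pmatrix}$ act by $u\mapsto au+cv$, $v\mapsto bu+dv$. With $\omega$ a primitive $(2nk)$th root of unity, $G_{n,k}$ is generated by $\mathrm{diag}(\omega^{2k},\omega^{-2k})$ and $\begin{pmatrix}0&\omega^n\\\omega^n&0\end{pmatrix}$. $A^G=\{a\in A: g\cdot a=a\ \forall g\in G\}$. *)

theory Defs
  imports "HOL-Computational_Algebra.Polynomial"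
begin

text \<open>The skew polynomial ring k_{-1}[u,v], modelled on its monomial basis u^i v^j:
  an element is a finitely supported coefficient function on pairs (i,j).\<close>

type_synonym 'a skp = "nat \<times> nat \<Rightarrow> 'a"

definition skA :: "'a::comm_ring_1 skp set" where
  "skA = {f. finite {p. f p \<noteq> 0}}"

text \<open>(u^a v^b)(u^c v^d) = (-1)^(b c) u^(a+c) v^(b+d), since vu = -uv.\<close>
definition skmul :: "'a::comm_ring_1 skp \<Rightarrow> 'a skp \<Rightarrow> 'a skp" where
  "skmul f g = (\<lambda>p. \<Sum>q\<in>{0..fst p}\<times>{0..snd p}.
      (-1) ^ (snd q * (fst p - fst q)) * f q * g (fst p - fst q, snd p - snd q))"

definition skone :: "'a::comm_ring_1 skp" where
  "skone = (\<lambda>p. if p = (0,0) then 1 else 0)"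

definition skpow :: "'a::comm_ring_1 skp \<Rightarrow> nat \<Rightarrow> 'a skp" where
  "skpow f m = ((\<lambda>h. skmul f h) ^^ m) skone"

definition sklin :: "'a::comm_ring_1 \<Rightarrow> 'a \<Rightarrow> 'a skp" where
  "sklin x y = (\<lambda>p. if p = (1,0) then x else if p = (0,1) then y else 0)"

text \<open>2x2 matrices (a,b,c,d) = [[a,b],[c,d]].\<close>
type_synonym 'a mat2 = "'a \<times> 'a \<times> 'a \<times> 'a"

definition mmul :: "'a::comm_ring_1 mat2 \<Rightarrow> 'a mat2 \<Rightarrow> 'a mat2" where
  "mmul M N = (case M of (a,b,c,d) \<Rightarrow> case N of (a',b',c',d') \<Rightarrow>
      (a*a'+b*c', a*b'+b*d', c*a'+d*c', c*b'+d*d'))"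

definition mono_img :: "'a::comm_ring_1 mat2 \<Rightarrow> nat \<times> nat \<Rightarrow> 'a skp" where
  "mono_img M q = (case M of (a,b,c,d) \<Rightarrow>
      skmul (skpow (sklin a c) (fst q)) (skpow (sklin b d) (snd q)))"

definition act :: "'a::comm_ring_1 mat2 \<Rightarrow> 'a skp \<Rightarrow> 'a skp" where
  "act M f = (\<lambda>p. \<Sum>q\<in>{q. f q \<noteq> 0}. f q * mono_img M q p)"

text \<open>Subgroup generated by two matrices of finite order (monoid closure suffices).\<close>
inductive_set Ggen :: "'a::comm_ring_1 mat2 \<Rightarrow> 'a mat2 \<Rightarrow> 'a mat2 set" for s1 s2 where
  one: "(1,0,0,1) \<in> Ggen s1 s2"
| step1: "g \<in> Ggen s1 s2 \<Longrightarrow> mmul g s1 \<in> Ggen s1 s2"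
| step2: "g \<in> Ggen s1 s2 \<Longrightarrow> mmul g s2 \<in> Ggen s1 s2"

definition Gnk :: "'a::field \<Rightarrow> nat \<Rightarrow> nat \<Rightarrow> 'a mat2 set" where
  "Gnk \<omega> n k = Ggen (\<omega>^(2*k), 0, 0, inverse (\<omega>^(2*k))) (0, \<omega>^n, \<omega>^n, 0)"

definition invariants :: "'a::comm_ring_1 mat2 set \<Rightarrow> 'a skp set" where
  "invariants G = {f \<in> skA. \<forall>g\<in>G. act g f = f}"

definition sk_commutative :: "'a::comm_ring_1 skp set \<Rightarrow> bool" where
  "sk_commutative S = (\<forall>f\<in>S. \<forall>g\<in>S. skmul f g = skmul g f)"

end

theory Submission
  imports Defs
begin

text \<open>Every element of G_{n,k} is diagonal or antidiagonal, so it maps each monomial u^i v^j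
  to a scalar multiple of u^i v^j or of u^j v^i. Invariance under diag(\<omega>^{2k}, \<omega>^{-2k}) and
  under the scalar (\<omega>^{2n}) = T^2 confines invariants to monomials with i \<equiv> j (mod n) and
  k | i + j. If n or k is even, all these monomials have even degree, and elements spanned by
  even-degree monomials commute in k_{-1}[u,v]. If n and k are both odd, a = nk is odd,
  and u^a - v^a and u^{3a} v^a - u^a v^{3a} are invariants whose two products differ in the
  coefficient of u^{4a} v^a.\<close>

definition skmonom :: "'a::comm_ring_1 \<Rightarrow> nat \<times> nat \<Rightarrow> 'a skp" where
  "skmonom c m = (\<lambda>p. if p = m then c else 0)"

lemma skmul_skmonom:
  "skmul (skmonom \<alpha> (a, b)) (skmonom \<beta> (c, d)) = skmonom (\<alpha> * \<beta> * (-1) ^ (b * c)) (a + c, b + d)"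
proof
  fix p :: "nat \<times> nat"
  let ?B = "{0..fst p} \<times> {0..snd p}"
  have "skmul (skmonom \<alpha> (a, b)) (skmonom \<beta> (c, d)) p =
      (\<Sum>q\<in>?B. if q = (a, b) then (-1) ^ (b * (fst p - a)) * \<alpha> *
         (if (fst p - a, snd p - b) = (c, d) then \<beta> else 0) else 0)"
    unfolding skmul_def skmonom_def by (rule sum.cong) auto
  also have "\<dots> = skmonom (\<alpha> * \<beta> * (-1) ^ (b * c)) (a + c, b + d) p"
    by (cases p) (auto simp: skmonom_def)
  finally show "skmul (skmonom \<alpha> (a, b)) (skmonom \<beta> (c, d)) p =
      skmonom (\<alpha> * \<beta> * (-1) ^ (b * c)) (a + c, b + d) p" .
qed

lemma skmul_diff_left: "skmul (f - g) h = skmul f h - skmul g h"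
  unfolding skmul_def by (auto simp: algebra_simps sum_subtractf)

lemma skmul_diff_right: "skmul h (f - g) = skmul h f - skmul h g"
  unfolding skmul_def by (auto simp: algebra_simps sum_subtractf)

lemma skmonom_in_skA: "skmonom c m \<in> skA"
proof -
  have "{p. skmonom c m p \<noteq> 0} \<subseteq> {m}" by (auto simp: skmonom_def)
  then show ?thesis unfolding skA_def by (auto intro: finite_subset)
qed

lemma skA_diff: "f \<in> skA \<Longrightarrow> g \<in> skA \<Longrightarrow> f - g \<in> skA"
proof -
  assume "f \<in> skA" "g \<in> skA"
  moreover have "{p. (f - g) p \<noteq> 0} \<subseteq> {p. f p \<noteq> 0} \<union> {p. g p \<noteq> 0}" by auto
  ultimately show ?thesis unfolding skA_def by (auto intro: finite_subset)
qed

lemma skpow_Suc: "skpow f (Suc m) = skmul f (skpow f m)"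
  unfolding skpow_def by simp

lemma skpow_0: "skpow f 0 = skmonom 1 (0, 0)"
  unfolding skpow_def skone_def skmonom_def by simp

lemma skpow_u: "skpow (skmonom \<alpha> (1, 0)) m = skmonom (\<alpha> ^ m) (m, 0)"
  by (induction m) (simp_all add: skpow_0 skpow_Suc skmul_skmonom)

lemma skpow_v: "skpow (skmonom \<alpha> (0, 1)) m = skmonom (\<alpha> ^ m) (0, m)"
  by (induction m) (simp_all add: skpow_0 skpow_Suc skmul_skmonom)

lemma sklin_u: "sklin x 0 = skmonom x (1, 0)"
  by (auto simp: sklin_def skmonom_def)

lemma sklin_v: "sklin 0 y = skmonom y (0, 1)"
  by (auto simp: sklin_def skmonom_def)

lemma mono_img_diag: "mono_img (x, 0, 0, y) (i, j) = skmonom (x ^ i * y ^ j) (i, j)"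
  unfolding mono_img_def
  by (simp only: prod.case fst_conv snd_conv sklin_u sklin_v skpow_u skpow_v skmul_skmonom) simp

lemma mono_img_antidiag:
  "mono_img (0, b, c, 0) (i, j) = skmonom (c ^ i * b ^ j * (-1) ^ (i * j)) (j, i)"
  unfolding mono_img_def
  by (simp only: prod.case fst_conv snd_conv sklin_u sklin_v skpow_u skpow_v skmul_skmonom) simp

lemma act_monomial_image:
  assumes "f \<in> skA" and img: "\<And>q. mono_img M q = skmonom (c q) (\<sigma> q)" and "inj \<sigma>"
  shows "act M f (\<sigma> q) = f q * c q"
proof -
  have "act M f (\<sigma> q) = (\<Sum>r\<in>{r. f r \<noteq> 0}. if r = q then f q * c q else 0)"
    unfolding act_def img skmonom_def using \<open>inj \<sigma>\<close> by (intro sum.cong) (auto dest: injD)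
  also have "\<dots> = f q * c q"
    using \<open>f \<in> skA\<close> by (auto simp: skA_def)
  finally show ?thesis .
qed

lemma act_diag:
  assumes "f \<in> skA"
  shows "act (x, 0, 0, y) f (i, j) = f (i, j) * x ^ i * y ^ j"
proof -
  have "act (x, 0, 0, y) f (id (i, j)) = f (i, j) * (case (i, j) of (i, j) \<Rightarrow> x ^ i * y ^ j)"
    by (rule act_monomial_image[OF assms]) (auto simp: mono_img_diag)
  then show ?thesis by (simp add: mult.assoc)
qed

lemma act_antidiag:
  assumes "f \<in> skA"
  shows "act (0, b, c, 0) f (i, j) = f (j, i) * c ^ j * b ^ i * (-1) ^ (i * j)"
proof -
  have "act (0, b, c, 0) f (prod.swap (j, i)) =
      f (j, i) * (case (j, i) of (i, j) \<Rightarrow> c ^ i * b ^ j * (-1) ^ (i * j))"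
    by (rule act_monomial_image[OF assms]) (auto simp: mono_img_antidiag)
  then show ?thesis by (simp add: mult.assoc mult.commute)
qed

lemma skmul_commute_even_support:
  fixes f g :: "'a::comm_ring_1 skp"
  assumes f: "\<And>p. f p \<noteq> 0 \<Longrightarrow> even (fst p + snd p)"
    and g: "\<And>p. g p \<noteq> 0 \<Longrightarrow> even (fst p + snd p)"
  shows "skmul f g = skmul g f"
proof
  fix p :: "nat \<times> nat"
  let ?B = "{0..fst p} \<times> {0..snd p}"
  let ?j = "\<lambda>q::nat \<times> nat. (fst p - fst q, snd p - snd q)"
  show "skmul f g p = skmul g f p"
    unfolding skmul_def
  proof (rule sum.reindex_bij_witness[where i = ?j and j = ?j])
    fix q assume q: "q \<in> ?B"
    show "?j (?j q) = q" and "?j q \<in> ?B" using q by (cases q; auto)+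
    show "(-1) ^ (snd (?j q) * (fst p - fst (?j q))) * g (?j q) * f (fst p - fst (?j q), snd p - snd (?j q))
        = (-1) ^ (snd q * (fst p - fst q)) * f q * g (fst p - fst q, snd p - snd q)"
    proof (cases "f q = 0 \<or> g (?j q) = 0")
      case True
      then show ?thesis using q by (cases q) auto
    next
      case False
      then have "even (fst q + snd q)" and "even ((fst p - fst q) + (snd p - snd q))"
        using f[of q] g[of "?j q"] by auto
      \<comment> \<open>even degree: both factors have fst \<equiv> snd (mod 2), so the sign exponents agree mod 2\<close>
      then have "even ((snd p - snd q) * fst q) = even (snd q * (fst p - fst q))"
        by (auto simp: even_mult_iff)
      then have "(-1::'a) ^ ((snd p - snd q) * fst q) = (-1) ^ (snd q * (fst p - fst q))"
        by (simp add: minus_one_power_iff)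
      then show ?thesis using q by (cases q) (auto simp: algebra_simps)
    qed
  qed auto
qed

lemma power_mod_order:
  fixes x :: "'a::monoid_mult"
  assumes "x ^ N = 1"
  shows "x ^ m = x ^ (m mod N)"
proof -
  have "x ^ m = (x ^ N) ^ (m div N) * x ^ (m mod N)"
    by (simp flip: power_mult power_add)
  then show ?thesis using assms by simp
qed

lemma power_eq_if_mod_eq:
  fixes x :: "'a::monoid_mult"
  assumes "x ^ N = 1" and "i mod N = j mod N"
  shows "x ^ i = x ^ j"
  using power_mod_order[OF assms(1)] assms(2) by metis

lemma primitive_root_power_eq_iff:
  fixes \<omega> :: "'a::field"
  assumes "\<omega> ^ N = 1" and prim: "\<forall>m. 0 < m \<and> m < N \<longrightarrow> \<omega> ^ m \<noteq> 1" and "N > 0"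
  shows "\<omega> ^ a = \<omega> ^ b \<longleftrightarrow> a mod N = b mod N"
proof
  have "\<omega> \<noteq> 0" using assms(1,3) by (auto simp: power_0_left)
  have order_dvd: "N dvd m" if "\<omega> ^ m = 1" for m
  proof -
    have "\<omega> ^ (m mod N) = 1" using that power_mod_order[OF assms(1)] by metis
    then have "\<not> (0 < m mod N \<and> m mod N < N)" using prim by blast
    then show ?thesis using \<open>N > 0\<close> by (simp add: dvd_eq_mod_eq_0)
  qed
  have mod_eq: "a mod N = b mod N" if "\<omega> ^ a = \<omega> ^ b" "b \<le> a" for a b
  proof -
    have "\<omega> ^ (a - b) * \<omega> ^ b = \<omega> ^ b" using that by (simp flip: power_add)
    then have "\<omega> ^ (a - b) = 1" using \<open>\<omega> \<noteq> 0\<close> by simp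
    then show ?thesis using order_dvd mod_eq_dvd_iff_nat[OF \<open>b \<le> a\<close>] by blast
  qed
  assume "\<omega> ^ a = \<omega> ^ b"
  then show "a mod N = b mod N"
    using mod_eq[of a b] mod_eq[of b a] by (cases "b \<le> a") auto
next
  show "a mod N = b mod N \<Longrightarrow> \<omega> ^ a = \<omega> ^ b" by (rule power_eq_if_mod_eq[OF assms(1)])
qed

text \<open>The monomials u^i v^j that can occur in an invariant of G_{n,k}.\<close>
definition Gnk_lattice :: "nat \<Rightarrow> nat \<Rightarrow> (nat \<times> nat) set" where
  "Gnk_lattice n k = {(i, j). i mod n = j mod n \<and> k dvd i + j}"

lemma Gnk_lattice_swap: "(i, j) \<in> Gnk_lattice n k \<Longrightarrow> (j, i) \<in> Gnk_lattice n k"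
  by (simp add: Gnk_lattice_def add.commute)

lemma Gnk_lattice_even_degree:
  assumes "even n \<or> even k" and "(i, j) \<in> Gnk_lattice n k"
  shows "even (i + j)"
  using assms(1)
proof
  assume "even n"
  moreover have "i mod n = j mod n" using assms(2) by (simp add: Gnk_lattice_def)
  ultimately have "i mod 2 = j mod 2" by (metis mod_mod_cancel)
  then show ?thesis by presburger
next
  assume "even k"
  moreover have "k dvd i + j" using assms(2) by (simp add: Gnk_lattice_def)
  ultimately show ?thesis by (rule dvd_trans)
qed

lemma Ggen_diag_antidiag:
  fixes \<omega> \<xi> :: "'a::field"
  assumes \<omega>: "\<omega> ^ (2 * n * k) = 1" and \<xi>: "\<xi> ^ n = 1" "\<xi> \<noteq> 0"
    and "M \<in> Ggen (\<xi>, 0, 0, inverse \<xi>) (0, \<omega> ^ n, \<omega> ^ n, 0)"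
  shows "(\<exists>x y. M = (x, 0, 0, y) \<and> (\<forall>(i, j) \<in> Gnk_lattice n k. x ^ i * y ^ j = 1)) \<or>
    (\<exists>b c. M = (0, b, c, 0) \<and> (\<forall>(i, j) \<in> Gnk_lattice n k. c ^ i * b ^ j = \<omega> ^ (n * (i + j))))"
proof -
  have \<xi>_lattice: "\<xi> ^ i * inverse \<xi> ^ j = 1" if "(i, j) \<in> Gnk_lattice n k" for i j
  proof -
    have "\<xi> ^ i = \<xi> ^ j"
      using that by (intro power_eq_if_mod_eq[OF \<xi>(1)]) (simp add: Gnk_lattice_def)
    then show ?thesis using \<xi>(2) by (simp add: power_inverse)
  qed
  have \<omega>_lattice: "\<omega> ^ (n * (i + j)) * \<omega> ^ (n * (i + j)) = 1" if ij: "(i, j) \<in> Gnk_lattice n k" for i j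
  proof -
    obtain t where "i + j = k * t" using ij by (auto simp: Gnk_lattice_def)
    then have "n * (i + j) + n * (i + j) = 2 * n * k * t" by simp
    then have "\<omega> ^ (n * (i + j)) * \<omega> ^ (n * (i + j)) = (\<omega> ^ (2 * n * k)) ^ t"
      by (metis power_add power_mult)
    then show ?thesis using \<omega> by simp
  qed
  from assms(4) show ?thesis
  proof induction
    case one
    then show ?case by simp
  next
    case (step1 g)
    then show ?case
    proof (elim disjE exE conjE)
      fix x y assume g: "g = (x, 0, 0, y)" and diag: "\<forall>(i, j) \<in> Gnk_lattice n k. x ^ i * y ^ j = 1"
      have "\<forall>(i, j) \<in> Gnk_lattice n k. (x * \<xi>) ^ i * (y * inverse \<xi>) ^ j = 1"
      proof clarify
        fix i j assume "(i, j) \<in> Gnk_lattice n k"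
        then have "(x ^ i * y ^ j) * (\<xi> ^ i * inverse \<xi> ^ j) = 1" using diag \<xi>_lattice by auto
        then show "(x * \<xi>) ^ i * (y * inverse \<xi>) ^ j = 1" by (simp add: power_mult_distrib mult_ac)
      qed
      then show ?case by (simp add: g mmul_def)
    next
      fix b c assume g: "g = (0, b, c, 0)"
        and antidiag: "\<forall>(i, j) \<in> Gnk_lattice n k. c ^ i * b ^ j = \<omega> ^ (n * (i + j))"
      have "\<forall>(i, j) \<in> Gnk_lattice n k. (c * \<xi>) ^ i * (b * inverse \<xi>) ^ j = \<omega> ^ (n * (i + j))"
      proof clarify
        fix i j assume "(i, j) \<in> Gnk_lattice n k"
        then have "(c ^ i * b ^ j) * (\<xi> ^ i * inverse \<xi> ^ j) = \<omega> ^ (n * (i + j))"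
          using antidiag \<xi>_lattice by auto
        then show "(c * \<xi>) ^ i * (b * inverse \<xi>) ^ j = \<omega> ^ (n * (i + j))"
          by (simp add: power_mult_distrib mult_ac)
      qed
      then show ?case by (simp add: g mmul_def)
    qed
  next
    case (step2 g)
    then show ?case
    proof (elim disjE exE conjE)
      fix x y assume g: "g = (x, 0, 0, y)" and diag: "\<forall>(i, j) \<in> Gnk_lattice n k. x ^ i * y ^ j = 1"
      have "\<forall>(i, j) \<in> Gnk_lattice n k. (y * \<omega> ^ n) ^ i * (x * \<omega> ^ n) ^ j = \<omega> ^ (n * (i + j))"
      proof clarify
        fix i j assume "(i, j) \<in> Gnk_lattice n k"
        then have "x ^ j * y ^ i = 1" using diag Gnk_lattice_swap by fastforce
        then have "(x ^ j * y ^ i) * \<omega> ^ (n * (i + j)) = \<omega> ^ (n * (i + j))" by simp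
        then show "(y * \<omega> ^ n) ^ i * (x * \<omega> ^ n) ^ j = \<omega> ^ (n * (i + j))"
          by (simp add: power_mult_distrib algebra_simps power_add flip: power_mult)
      qed
      then show ?case by (simp add: g mmul_def)
    next
      fix b c assume g: "g = (0, b, c, 0)"
        and antidiag: "\<forall>(i, j) \<in> Gnk_lattice n k. c ^ i * b ^ j = \<omega> ^ (n * (i + j))"
      have "\<forall>(i, j) \<in> Gnk_lattice n k. (b * \<omega> ^ n) ^ i * (c * \<omega> ^ n) ^ j = 1"
      proof clarify
        fix i j assume ij: "(i, j) \<in> Gnk_lattice n k"
        then have "c ^ j * b ^ i = \<omega> ^ (n * (i + j))"
          using antidiag Gnk_lattice_swap by (fastforce simp: add.commute)
        then have "(c ^ j * b ^ i) * \<omega> ^ (n * (i + j)) = 1" using \<omega>_lattice[OF ij] by simp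
        then show "(b * \<omega> ^ n) ^ i * (c * \<omega> ^ n) ^ j = 1"
          by (simp add: power_mult_distrib algebra_simps power_add flip: power_mult)
      qed
      then show ?case by (simp add: g mmul_def)
    qed
  qed
qed

lemma Gnk_diag_antidiag:
  fixes \<omega> :: "'a::field"
  assumes "\<omega> ^ (2 * n * k) = 1" and "\<omega> \<noteq> 0" and "M \<in> Gnk \<omega> n k"
  shows "(\<exists>x y. M = (x, 0, 0, y) \<and> (\<forall>(i, j) \<in> Gnk_lattice n k. x ^ i * y ^ j = 1)) \<or>
    (\<exists>b c. M = (0, b, c, 0) \<and> (\<forall>(i, j) \<in> Gnk_lattice n k. c ^ i * b ^ j = \<omega> ^ (n * (i + j))))"
proof (rule Ggen_diag_antidiag[OF assms(1)])
  show "(\<omega> ^ (2 * k)) ^ n = 1" using assms(1) by (simp flip: power_mult add: mult_ac)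
  show "\<omega> ^ (2 * k) \<noteq> 0" using assms(2) by simp
  show "M \<in> Ggen (\<omega> ^ (2 * k), 0, 0, inverse (\<omega> ^ (2 * k))) (0, \<omega> ^ n, \<omega> ^ n, 0)"
    using assms(3) by (simp add: Gnk_def)
qed

lemma in_invariants_GnkI:
  fixes \<omega> :: "'a::field"
  assumes "\<omega> ^ (2 * n * k) = 1" and "\<omega> \<noteq> 0" and "f \<in> skA"
    and supp: "\<And>p. f p \<noteq> 0 \<Longrightarrow> p \<in> Gnk_lattice n k"
    and twist: "\<And>i j. f (i, j) = f (j, i) * \<omega> ^ (n * (i + j)) * (-1) ^ (i * j)"
  shows "f \<in> invariants (Gnk \<omega> n k)"
  unfolding invariants_def
proof (intro CollectI conjI ballI \<open>f \<in> skA\<close>)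
  fix M assume "M \<in> Gnk \<omega> n k"
  from Gnk_diag_antidiag[OF assms(1,2) this] show "act M f = f"
  proof (elim disjE exE conjE)
    fix x y assume M: "M = (x, 0, 0, y)" and diag: "\<forall>(i, j) \<in> Gnk_lattice n k. x ^ i * y ^ j = 1"
    show "act M f = f"
    proof (rule ext, clarify)
      fix i j
      have "f (i, j) * x ^ i * y ^ j = f (i, j)"
        using diag supp[of "(i, j)"] by (cases "f (i, j) = 0") (auto simp: mult.assoc)
      then show "act M f (i, j) = f (i, j)" by (simp add: M act_diag[OF \<open>f \<in> skA\<close>])
    qed
  next
    fix b c assume M: "M = (0, b, c, 0)"
      and antidiag: "\<forall>(i, j) \<in> Gnk_lattice n k. c ^ i * b ^ j = \<omega> ^ (n * (i + j))"
    show "act M f = f"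
    proof (rule ext, clarify)
      fix i j
      have "f (j, i) * c ^ j * b ^ i = f (j, i) * \<omega> ^ (n * (i + j))"
        using antidiag supp[of "(j, i)"] by (cases "f (j, i) = 0") (auto simp: mult.assoc add.commute)
      then show "act M f (i, j) = f (i, j)"
        by (simp add: M act_antidiag[OF \<open>f \<in> skA\<close>] twist[of i j])
    qed
  qed
qed

lemma Gnk_generator_diag: "(\<omega> ^ (2 * k), 0, 0, inverse (\<omega> ^ (2 * k))) \<in> Gnk \<omega> n k"
  using Ggen.step1[OF Ggen.one] unfolding Gnk_def by (simp add: mmul_def)

lemma Gnk_scalar: "(\<omega> ^ (2 * n), 0, 0, \<omega> ^ (2 * n)) \<in> Gnk \<omega> n k"
proof -
  let ?T = "(0, \<omega> ^ n, \<omega> ^ n, 0)"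
  have "mmul (mmul (1, 0, 0, 1) ?T) ?T \<in> Gnk \<omega> n k"
    unfolding Gnk_def by (intro Ggen.step2 Ggen.one)
  then show ?thesis by (simp add: mmul_def mult_2 power_add)
qed

lemma invariants_Gnk_support:
  fixes \<omega> :: "'a::field"
  assumes \<omega>: "\<omega> ^ (2 * n * k) = 1" and prim: "\<forall>m. 0 < m \<and> m < 2 * n * k \<longrightarrow> \<omega> ^ m \<noteq> 1"
    and "n > 0" and "k > 0" and f: "f \<in> invariants (Gnk \<omega> n k)" and "f (i, j) \<noteq> 0"
  shows "(i, j) \<in> Gnk_lattice n k"
proof -
  have "f \<in> skA" and fixed: "\<And>M. M \<in> Gnk \<omega> n k \<Longrightarrow> act M f (i, j) = f (i, j)"
    using f by (auto simp: invariants_def)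
  have "2 * n * k > 0" using \<open>n > 0\<close> \<open>k > 0\<close> by simp
  note power_eq_iff = primitive_root_power_eq_iff[OF \<omega> prim this]
  have "\<omega> \<noteq> 0" using \<omega> \<open>2 * n * k > 0\<close> by (auto simp: power_0_left)
  have "f (i, j) * (\<omega> ^ (2 * k)) ^ i * inverse (\<omega> ^ (2 * k)) ^ j = f (i, j)"
    using fixed[OF Gnk_generator_diag] by (simp add: act_diag[OF \<open>f \<in> skA\<close>])
  then have "(\<omega> ^ (2 * k)) ^ i = (\<omega> ^ (2 * k)) ^ j"
    using \<open>f (i, j) \<noteq> 0\<close> \<open>\<omega> \<noteq> 0\<close> by (simp add: power_inverse field_simps)
  then have "\<omega> ^ (i * (2 * k)) = \<omega> ^ (j * (2 * k))"
    by (simp only: power_mult mult.commute[of _ "2 * k"])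
  then have "(i mod n) * (2 * k) = (j mod n) * (2 * k)"
    unfolding power_eq_iff by (simp add: mod_mult_mult2 mult_ac)
  then have "i mod n = j mod n" using \<open>k > 0\<close> by simp
  have "f (i, j) * (\<omega> ^ (2 * n)) ^ i * (\<omega> ^ (2 * n)) ^ j = f (i, j)"
    using fixed[OF Gnk_scalar] by (simp add: act_diag[OF \<open>f \<in> skA\<close>])
  then have "(\<omega> ^ (2 * n)) ^ (i + j) = 1"
    using \<open>f (i, j) \<noteq> 0\<close> by (simp add: power_add mult.assoc)
  then have "\<omega> ^ ((i + j) * (2 * n)) = \<omega> ^ (0 * (2 * n))"
    by (simp only: power_mult mult.commute[of _ "2 * n"]) simp
  moreover have "2 * n * k = k * (2 * n)" by simp
  ultimately have "((i + j) mod k) * (2 * n) = (0 mod k) * (2 * n)"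
    unfolding power_eq_iff by (simp only: mod_mult_mult2)
  then have "k dvd i + j" using \<open>n > 0\<close> by (simp add: dvd_eq_mod_eq_0)
  with \<open>i mod n = j mod n\<close> show ?thesis by (simp add: Gnk_lattice_def)
qed

lemma invariants_Gnk_commutative:
  fixes \<omega> :: "'a::field"
  assumes "\<omega> ^ (2 * n * k) = 1" and "\<forall>m. 0 < m \<and> m < 2 * n * k \<longrightarrow> \<omega> ^ m \<noteq> 1"
    and "n > 0" and "k > 0" and "even n \<or> even k"
  shows "sk_commutative (invariants (Gnk \<omega> n k))"
  unfolding sk_commutative_def
proof (intro ballI)
  have even_support: "even (fst p + snd p)" if "f \<in> invariants (Gnk \<omega> n k)" "f p \<noteq> 0" for f p
    using invariants_Gnk_support[OF assms(1-4), of f "fst p" "snd p"] that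
      Gnk_lattice_even_degree[OF assms(5)] by simp
  fix f g assume f: "f \<in> invariants (Gnk \<omega> n k)" and g: "g \<in> invariants (Gnk \<omega> n k)"
  show "skmul f g = skmul g f"
    by (rule skmul_commute_even_support[OF even_support[OF f] even_support[OF g]])
qed

lemma skmonom_antisym_in_invariants:
  fixes \<omega> :: "'a::field"
  assumes "\<omega> ^ (2 * n * k) = 1" and "\<omega> \<noteq> 0" and "(i, j) \<in> Gnk_lattice n k" and "i \<noteq> j"
    and twist: "\<omega> ^ (n * (i + j)) * (-1) ^ (i * j) = -1"
  shows "skmonom 1 (i, j) - skmonom 1 (j, i) \<in> invariants (Gnk \<omega> n k)"
proof (rule in_invariants_GnkI[OF assms(1,2)])
  show "skmonom 1 (i, j) - skmonom 1 (j, i) \<in> skA"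
    by (intro skA_diff skmonom_in_skA)
  show "p \<in> Gnk_lattice n k" if "(skmonom 1 (i, j) - skmonom 1 (j, i)) p \<noteq> 0" for p
    using that assms(3) Gnk_lattice_swap by (auto simp: skmonom_def split: if_splits)
  have twist': "\<omega> ^ (n * (j + i)) * (-1) ^ (j * i) = -1"
    using twist by (simp add: add.commute mult.commute)
  show "(skmonom 1 (i, j) - skmonom 1 (j, i)) (p, q) =
      (skmonom 1 (i, j) - skmonom 1 (j, i)) (q, p) * \<omega> ^ (n * (p + q)) * (-1) ^ (p * q)" for p q
    using \<open>i \<noteq> j\<close> twist twist' by (auto simp: skmonom_def mult.assoc)
qed

lemma skmul_antisym_binomials_not_commute:
  fixes a :: nat
  assumes "odd a"
  defines "F \<equiv> skmonom (1::'a::{comm_ring_1, ring_char_0}) (a, 0) - skmonom 1 (0, a)"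
    and "G \<equiv> skmonom (1::'a) (3 * a, a) - skmonom 1 (a, 3 * a)"
  shows "skmul F G \<noteq> skmul G F"
proof -
  have "a > 0" using \<open>odd a\<close> by (simp add: odd_pos)
  have "skmul F G (4 * a, a) = 1"
    using \<open>a > 0\<close> unfolding F_def G_def skmul_diff_left skmul_diff_right skmul_skmonom by (simp add: skmonom_def)
  moreover have "skmul G F (4 * a, a) = -1"
    using \<open>a > 0\<close> \<open>odd a\<close> unfolding F_def G_def skmul_diff_left skmul_diff_right skmul_skmonom by (simp add: skmonom_def)
  ultimately show ?thesis by (metis one_neq_neg_one)
qed

lemma invariants_Gnk_not_commutative:
  fixes \<omega> :: "'a::field_char_0"
  assumes \<omega>: "\<omega> ^ (2 * n * k) = 1" and prim: "\<forall>m. 0 < m \<and> m < 2 * n * k \<longrightarrow> \<omega> ^ m \<noteq> 1"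
    and "odd n" and "odd k"
  shows "\<not> sk_commutative (invariants (Gnk \<omega> n k))"
proof -
  define a where "a = n * k"
  have "odd a" and "a > 0" using \<open>odd n\<close> \<open>odd k\<close> by (auto simp: a_def odd_pos)
  have "\<omega> \<noteq> 0" using \<omega> \<open>a > 0\<close> by (auto simp: a_def power_0_left)
  have "(\<omega> ^ a) ^ 2 = 1" using \<omega> by (simp add: a_def flip: power_mult) (simp add: mult_ac)
  moreover have "\<omega> ^ a \<noteq> 1" using prim \<open>a > 0\<close> by (simp add: a_def)
  ultimately have "\<omega> ^ a = -1" by (simp add: power2_eq_1_iff)
  have "\<omega> ^ (n * (a + 0)) * (-1) ^ (a * 0) = -1"
    using \<open>\<omega> ^ a = -1\<close> \<open>odd n\<close> by (simp add: power_mult mult.commute[of n])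
  then have F: "skmonom 1 (a, 0) - skmonom 1 (0, a) \<in> invariants (Gnk \<omega> n k)"
    using \<open>a > 0\<close> by (intro skmonom_antisym_in_invariants[OF \<omega> \<open>\<omega> \<noteq> 0\<close>])
      (auto simp: Gnk_lattice_def a_def)
  have "\<omega> ^ (n * (3 * a + a)) * (-1) ^ (3 * a * a) = -1"
  proof -
    have "\<omega> ^ (n * (3 * a + a)) = ((\<omega> ^ a) ^ 4) ^ n" by (simp flip: power_mult add: mult_ac)
    then show ?thesis using \<open>\<omega> ^ a = -1\<close> \<open>odd a\<close> by simp
  qed
  then have G: "skmonom 1 (3 * a, a) - skmonom 1 (a, 3 * a) \<in> invariants (Gnk \<omega> n k)"
    using \<open>a > 0\<close> by (intro skmonom_antisym_in_invariants[OF \<omega> \<open>\<omega> \<noteq> 0\<close>])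
      (auto simp: Gnk_lattice_def a_def)
  from F G skmul_antisym_binomials_not_commute[OF \<open>odd a\<close>] show ?thesis
    by (auto simp: sk_commutative_def)
qed

theorem mainTheorem8:
  fixes \<omega> :: "'a::field_char_0" and n k :: nat
  assumes alg_closed: "\<forall>p :: 'a poly. degree p > 0 \<longrightarrow> (\<exists>x. poly p x = 0)"
    and "n > 0" and "k > 0" and "coprime n k" and "k mod 4 \<noteq> 2"
    and "\<omega> ^ (2*n*k) = 1" and "\<forall>m. 0 < m \<and> m < 2*n*k \<longrightarrow> \<omega> ^ m \<noteq> 1"
  shows "sk_commutative (invariants (Gnk \<omega> n k)) \<longleftrightarrow> (even n \<or> even k)"
proof
  assume "sk_commutative (invariants (Gnk \<omega> n k))"
  then show "even n \<or> even k" using invariants_Gnk_not_commutative[OF assms(6,7)] by blast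
next
  assume "even n \<or> even k"
  then show "sk_commutative (invariants (Gnk \<omega> n k))"
    by (rule invariants_Gnk_commutative[OF assms(6,7,2,3)])
qed

end
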